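(* Let $n>2k$, $k\ge t+3$, and let $\mathcal F\subseteq\binom{[n]}{k}$ be a maximal $t$-intersecting family with $\tau_t(\mathcal F)=t+2$ and $\tau_t(\mathcal T_t(\mathcal F))=t+2$. If $\mathcal T_t(\mathcal F)=\binom{Z}{t+2}$ for some $Z\in\binom{[n]}{t+4}$, then: (i) $\mathcal F=\{F\in\binom{[n]}{k}: |F\cap Z|\ge t+2\}$; (ii) $|\mathcal F|>\binom{t+4}{2}\left(\binom{n-t-2}{k-t-2}-2\binom{n-t-3}{k-t-3}\right)$.
   Context: A family is $t$-intersecting if any two members meet in at least $t$ elements. A $t$-cover of a family $\mathcal G$ of subsets of $[n]$ is a set $S\subseteq[n]$ with $|S\cap G|\ge t$ for all $G\in\mathcal G$; $\tau_t(\mathcal G)$ is the minimum size of a $t$-cover, and $\mathcal T_t(\mathcal G)$ is the set of all $t$-covers of $\mathcal G$ of size $\tau_t(\mathcal G)$. A $t$-intersecting $\mathcal F\subseteq\binom{[n]}{k}$ is maximal if no $t$-intersecting subfamily of $\binom{[n]}{k}$ properly contains it. *)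

theory Defs
  imports Complex_Main
begin

definition ksets :: "nat \<Rightarrow> nat \<Rightarrow> nat set set" where
  "ksets n k = {F. F \<subseteq> {1..n} \<and> card F = k}"

definition t_intersecting :: "nat \<Rightarrow> nat set set \<Rightarrow> bool" where
  "t_intersecting t \<F> \<longleftrightarrow> (\<forall>A\<in>\<F>. \<forall>B\<in>\<F>. card (A \<inter> B) \<ge> t)"

definition maximal_t_intersecting :: "nat \<Rightarrow> nat \<Rightarrow> nat \<Rightarrow> nat set set \<Rightarrow> bool" where
  "maximal_t_intersecting n k t \<F> \<longleftrightarrow>
     \<F> \<subseteq> ksets n k \<and> t_intersecting t \<F> \<and>
     (\<forall>\<G>. \<G> \<subseteq> ksets n k \<and> t_intersecting t \<G> \<and> \<F> \<subseteq> \<G> \<longrightarrow> \<G> = \<F>)"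

definition t_cover :: "nat \<Rightarrow> nat \<Rightarrow> nat set set \<Rightarrow> nat set \<Rightarrow> bool" where
  "t_cover n t \<G> S \<longleftrightarrow> S \<subseteq> {1..n} \<and> (\<forall>G\<in>\<G>. card (S \<inter> G) \<ge> t)"

definition tau :: "nat \<Rightarrow> nat \<Rightarrow> nat set set \<Rightarrow> nat" where
  "tau n t \<G> = (LEAST m. \<exists>S. t_cover n t \<G> S \<and> card S = m)"

definition Tcov :: "nat \<Rightarrow> nat \<Rightarrow> nat set set \<Rightarrow> nat set set" where
  "Tcov n t \<G> = {S. t_cover n t \<G> S \<and> card S = tau n t \<G>}"

end

theory Submission
  imports Defs
begin

text \<open>Every \<open>(t + 2)\<close>-subset of \<open>Z\<close> is a \<open>t\<close>-cover, so meets each member \<open>F\<close> of \<open>\<F>\<close>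
  in \<open>t\<close> points; taking such a subset with as many points outside \<open>F\<close> as possible shows
  \<open>|F \<inter> Z| \<ge> t + 2\<close>. Conversely, two sets meeting the \<open>(t + 4)\<close>-set \<open>Z\<close> in \<open>t + 2\<close> points
  each share \<open>t\<close> points of \<open>Z\<close>, so these sets form a \<open>t\<close>-intersecting family containing
  \<open>\<F>\<close>, and maximality gives equality. The sets meeting \<open>Z\<close> in exactly \<open>t + 2\<close> points already
  number \<open>C(t+4, 2) C(n-t-4, k-t-2)\<close>, which is at least the required bound by Pascal's rule,
  and a set meeting \<open>Z\<close> in \<open>t + 3\<close> points makes the inequality strict.\<close>

lemma finite_if_in_ksets: "F \<in> ksets n k \<Longrightarrow> finite F"
  by (auto simp: ksets_def intro: finite_subset)

lemma finite_ksets: "finite (ksets n k)"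
  by (rule finite_subset[of _ "Pow {1..n}"]) (auto simp: ksets_def)

lemma tau_0: "tau n 0 \<G> = 0"
proof -
  have "t_cover n 0 \<G> {}" by (simp add: t_cover_def)
  then show ?thesis unfolding tau_def by (intro Least_eq_0) auto
qed

lemma card_Int_ge_if_all_subsets_meet:
  assumes "finite Z" and "s \<le> card Z" and "0 < t"
    and meet: "\<And>S. S \<subseteq> Z \<Longrightarrow> card S = s \<Longrightarrow> t \<le> card (S \<inter> A)"
  shows "card Z + t \<le> card (A \<inter> Z) + s"
proof (rule ccontr)
  assume "\<not> ?thesis"
  moreover have "card (Z - A) = card Z - card (A \<inter> Z)"
    using \<open>finite Z\<close> by (simp add: card_Diff_subset_Int Int_commute)
  ultimately have outside: "s < card (Z - A) + t" by linarith
  define d where "d = min s (card (Z - A))"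
  obtain D where D: "D \<subseteq> Z - A" "card D = d"
    using obtain_subset_with_card_n[of d "Z - A"] by (auto simp: d_def)
  have "card (Z - D) = card Z - d"
    using D \<open>finite Z\<close> by (subst card_Diff_subset) (auto intro: finite_subset)
  then have "s - d \<le> card (Z - D)" using \<open>s \<le> card Z\<close> by simp
  then obtain E where E: "E \<subseteq> Z - D" "card E = s - d"
    by (rule obtain_subset_with_card_n)
  have "finite D" "finite E"
    using D E \<open>finite Z\<close> by (auto intro: finite_subset)
  then have "card (D \<union> E) = s"
    using D E by (subst card_Un_disjoint) (auto simp: d_def)
  with D E have "t \<le> card ((D \<union> E) \<inter> A)" by (intro meet) auto
  also have "\<dots> \<le> card E"
    using D \<open>finite E\<close> by (intro card_mono) auto
  finally show False
    using E outside \<open>0 < t\<close> by (auto simp: d_def)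
qed

lemma t_intersecting_if_large_trace:
  assumes "finite Z" and "\<forall>F\<in>\<A>. finite F" and "t + card Z \<le> 2 * r"
  shows "t_intersecting t {F \<in> \<A>. r \<le> card (F \<inter> Z)}"
  unfolding t_intersecting_def
proof (intro ballI)
  fix A B assume A: "A \<in> {F \<in> \<A>. r \<le> card (F \<inter> Z)}" and B: "B \<in> {F \<in> \<A>. r \<le> card (F \<inter> Z)}"
  have "card (A \<inter> Z) + card (B \<inter> Z) = card ((A \<inter> Z) \<union> (B \<inter> Z)) + card ((A \<inter> Z) \<inter> (B \<inter> Z))"
    using \<open>finite Z\<close> by (intro card_Un_Int) auto
  moreover have "card ((A \<inter> Z) \<union> (B \<inter> Z)) \<le> card Z"
    using \<open>finite Z\<close> by (intro card_mono) auto
  moreover have "card ((A \<inter> Z) \<inter> (B \<inter> Z)) \<le> card (A \<inter> B)"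
    using A assms(2) by (intro card_mono) auto
  ultimately show "t \<le> card (A \<inter> B)" using A B assms(3) by simp
qed

lemma card_ksets_trace_eq:
  assumes "Z \<subseteq> {1..n}" and "j \<le> k"
  shows "card {F \<in> ksets n k. card (F \<inter> Z) = j} = (card Z choose j) * ((n - card Z) choose (k - j))"
proof -
  define W where "W = {1..n} - Z"
  have "finite Z" "finite W" using assms(1) by (auto simp: W_def intro: finite_subset)
  have card_W: "card W = n - card Z"
    using assms(1) by (simp add: W_def card_Diff_subset \<open>finite Z\<close>)
  let ?P = "{S. S \<subseteq> Z \<and> card S = j}" and ?Q = "{B. B \<subseteq> W \<and> card B = k - j}"
  have to_trace: "S \<union> B \<in> ksets n k \<and> card ((S \<union> B) \<inter> Z) = j" if "S \<in> ?P" "B \<in> ?Q" for S B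
  proof -
    have "finite S" "finite B" "S \<inter> B = {}"
      using that \<open>finite Z\<close> \<open>finite W\<close> by (auto simp: W_def intro: finite_subset)
    then have "card (S \<union> B) = k" using that assms(2) by (simp add: card_Un_disjoint)
    moreover have "(S \<union> B) \<inter> Z = S" using that by (auto simp: W_def)
    ultimately show ?thesis using that assms(1) by (auto simp: ksets_def W_def)
  qed
  have split_trace: "F \<inter> Z \<in> ?P \<and> F - Z \<in> ?Q" if "F \<in> ksets n k" "card (F \<inter> Z) = j" for F
  proof -
    have "card (F - Z) = card F - card (F \<inter> Z)"
      using that(1) by (simp add: card_Diff_subset_Int finite_if_in_ksets)
    then show ?thesis using that by (auto simp: ksets_def W_def)
  qed
  have "bij_betw (\<lambda>(S, B). S \<union> B) (?P \<times> ?Q) {F \<in> ksets n k. card (F \<inter> Z) = j}"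
    by (rule bij_betw_byWitness[where f' = "\<lambda>F. (F \<inter> Z, F - Z)"])
      (use to_trace split_trace in \<open>auto simp: W_def\<close>)
  then have "card (?P \<times> ?Q) = card {F \<in> ksets n k. card (F \<inter> Z) = j}"
    by (rule bij_betw_same_card)
  then show ?thesis
    using n_subsets[OF \<open>finite Z\<close>, of j] n_subsets[OF \<open>finite W\<close>, of "k - j"] card_W
    by (simp add: card_cartesian_product)
qed

lemma card_ksets_trace_ge:
  assumes "Z \<subseteq> {1..n}"
  shows "card {F \<in> ksets n k. r \<le> card (F \<inter> Z)} =
    (\<Sum>j=r..k. (card Z choose j) * ((n - card Z) choose (k - j)))"
proof -
  have "{F \<in> ksets n k. r \<le> card (F \<inter> Z)} = (\<Union>j\<in>{r..k}. {F \<in> ksets n k. card (F \<inter> Z) = j})"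
  proof -
    have "card (F \<inter> Z) \<le> k" if "F \<in> ksets n k" for F
      using that card_mono[of F "F \<inter> Z"] by (auto simp: ksets_def finite_if_in_ksets[OF that])
    then show ?thesis by auto
  qed
  also have "card \<dots> = (\<Sum>j=r..k. card {F \<in> ksets n k. card (F \<inter> Z) = j})"
    using finite_ksets by (intro card_UN_disjoint) auto
  also have "\<dots> = (\<Sum>j=r..k. (card Z choose j) * ((n - card Z) choose (k - j)))"
    using assms by (intro sum.cong) (auto simp: card_ksets_trace_eq)
  finally show ?thesis .
qed

lemma card_ksets_trace_ge_gt:
  assumes "Z \<subseteq> {1..n}" and "r < card Z" and "r < k" and "k \<le> n - card Z + r + 1"
  shows "(card Z choose r) * ((n - card Z) choose (k - r)) < card {F \<in> ksets n k. r \<le> card (F \<inter> Z)}"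
proof -
  let ?term = "\<lambda>j. (card Z choose j) * ((n - card Z) choose (k - j))"
  have "0 < ?term (r + 1)" using assms(2,4) by simp
  then have "?term r < (\<Sum>j\<in>{r, r + 1}. ?term j)" by simp
  also have "\<dots> \<le> (\<Sum>j=r..k. ?term j)" using assms(3) by (intro sum_mono2) auto
  finally show ?thesis using card_ksets_trace_ge[OF assms(1)] by simp
qed

lemma choose_add_2_le: "(a + 2) choose (b + 1) \<le> (a choose (b + 1)) + 2 * ((a + 1) choose b)"
proof -
  have "(a + 2) choose (b + 1) = ((a + 1) choose (b + 1)) + ((a + 1) choose b)"
    using binomial_Suc_Suc[of "a + 1" b] by simp
  moreover have "(a + 1) choose (b + 1) = (a choose (b + 1)) + (a choose b)"
    using binomial_Suc_Suc[of a b] by simp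
  moreover have "a choose b \<le> (a + 1) choose b"
    by (cases b) auto
  ultimately show ?thesis by linarith
qed

lemma maximal_t_intersecting_eq_large_trace:
  assumes "maximal_t_intersecting n k t \<F>" and "0 < t"
    and "Z \<subseteq> {1..n}" and "card Z = t + 4"
    and covers: "\<And>S. S \<subseteq> Z \<Longrightarrow> card S = t + 2 \<Longrightarrow> t_cover n t \<F> S"
  shows "\<F> = {F \<in> ksets n k. t + 2 \<le> card (F \<inter> Z)}"
proof -
  let ?\<G> = "{F \<in> ksets n k. t + 2 \<le> card (F \<inter> Z)}"
  have "finite Z" using assms(3) by (rule finite_subset) simp
  have sub: "\<F> \<subseteq> ?\<G>"
  proof
    fix A assume "A \<in> \<F>"
    then have "t \<le> card (S \<inter> A)" if "S \<subseteq> Z" "card S = t + 2" for S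
      using covers[OF that] by (simp add: t_cover_def)
    then have "card Z + t \<le> card (A \<inter> Z) + (t + 2)"
      using \<open>finite Z\<close> assms(2,4) by (intro card_Int_ge_if_all_subsets_meet) auto
    then show "A \<in> ?\<G>" using \<open>A \<in> \<F>\<close> assms(1,4)
      by (auto simp: maximal_t_intersecting_def)
  qed
  have inter: "t_intersecting t ?\<G>"
    using \<open>finite Z\<close> assms(4) by (intro t_intersecting_if_large_trace) (auto simp: finite_if_in_ksets)
  have maximal: "\<And>\<G>. \<G> \<subseteq> ksets n k \<Longrightarrow> t_intersecting t \<G> \<Longrightarrow> \<F> \<subseteq> \<G> \<Longrightarrow> \<G> = \<F>"
    using assms(1) by (simp add: maximal_t_intersecting_def)
  show ?thesis
    by (rule sym, rule maximal) (use sub inter in auto)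
qed

lemma card_large_trace_gt:
  assumes "Z \<subseteq> {1..n}" and "card Z = t + 4" and "t + 3 \<le> k" and "k < n"
  shows "real ((t + 4) choose 2) *
      (real ((n - t - 2) choose (k - t - 2)) - 2 * real ((n - t - 3) choose (k - t - 3)))
    < real (card {F \<in> ksets n k. t + 2 \<le> card (F \<inter> Z)})" (is "_ < real (card ?\<G>)")
proof -
  define a where "a = n - (t + 4)"
  define b where "b = k - (t + 3)"
  have shifts: "n - (t + 4) = a" "k - (t + 2) = b + 1"
    "n - t - 2 = a + 2" "n - t - 3 = a + 1" "k - t - 2 = b + 1" "k - t - 3 = b"
    using assms(3,4) by (auto simp: a_def b_def)
  have "((t + 4) choose (t + 2)) * ((n - (t + 4)) choose (k - (t + 2))) < card ?\<G>"
    using card_ksets_trace_ge_gt[of Z n "t + 2" k] assms by simp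
  moreover have "(t + 4) choose (t + 2) = (t + 4) choose 2"
    using binomial_symmetric[of 2 "t + 4"] by simp
  ultimately have "((t + 4) choose 2) * (a choose (b + 1)) < card ?\<G>"
    by (simp only: shifts(1,2))
  then have "real ((t + 4) choose 2) * real (a choose (b + 1)) < real (card ?\<G>)"
    by (simp only: of_nat_mult[symmetric] of_nat_less_iff)
  moreover have "real ((a + 2) choose (b + 1)) - 2 * real ((a + 1) choose b) \<le> real (a choose (b + 1))"
    using choose_add_2_le[of a b] by linarith
  ultimately show ?thesis
    unfolding shifts by (meson le_less_trans mult_left_mono of_nat_0_le_iff)
qed

theorem lemma2p11:
  fixes n k t :: nat and \<F> :: "nat set set" and Z :: "nat set"
  assumes "n > 2 * k" and "k \<ge> t + 3"
    and "maximal_t_intersecting n k t \<F>"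
    and "tau n t \<F> = t + 2"
    and "tau n t (Tcov n t \<F>) = t + 2"
    and "Z \<in> ksets n (t + 4)"
    and "Tcov n t \<F> = {S. S \<subseteq> Z \<and> card S = t + 2}"
  shows "\<F> = {F \<in> ksets n k. card (F \<inter> Z) \<ge> t + 2} \<and>
         real (card \<F>) > real ((t + 4) choose 2) *
           (real ((n - t - 2) choose (k - t - 2)) - 2 * real ((n - t - 3) choose (k - t - 3)))"
proof -
  \<comment> \<open>The hypothesis on \<open>\<tau>\<^sub>t(\<F>)\<close> only serves to exclude \<open>t = 0\<close>, where every set is a
    \<open>0\<close>-cover.\<close>
  have "0 < t" using assms(4) tau_0[of n \<F>] by (cases t) auto
  have Z: "Z \<subseteq> {1..n}" "card Z = t + 4"
    using assms(6) by (auto simp: ksets_def)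
  have "t_cover n t \<F> S" if "S \<subseteq> Z" "card S = t + 2" for S
    using that assms(7) by (auto simp: Tcov_def)
  then have F_eq: "\<F> = {F \<in> ksets n k. t + 2 \<le> card (F \<inter> Z)}"
    using assms(3) \<open>0 < t\<close> Z by (intro maximal_t_intersecting_eq_large_trace) auto
  moreover have "k < n" using assms(1) by linarith
  ultimately show ?thesis
    using card_large_trace_gt[OF Z assms(2)] by auto
qed

end
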